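(* Fix $\alpha>0$. The function $\Psi$ is a strictly convex, strictly increasing on $[0,\infty)$, $C^2$ Young function, and the gauge norm $N_\Psi(f)$ may equivalently be defined as the number $\lambda>0$ with $\int_{\mathbb R}\Psi(f(x)/\lambda)\,dx=1$; this defines a norm. The corresponding Orlicz space satisfies $\mathcal L^\Psi\cong L^2(\mathbb R)\cap L^3(\mathbb R)$ in the sense that $N_\Psi(f)\eqsim\max(\|f\|_{L^2},\|f\|_{L^3})$. Moreover, the estimates $\|f\|_{L^2}\lesssim\alpha^{-1/2}N_\Psi(f)$ and $\|f\|_{L^3}\lesssim N_\Psi(f)$ hold with constants independent of $\alpha>0$.
   Context: $\Psi=\Psi_\alpha$ is the even function with $\Psi(y)=\alpha y^2-\frac13y^3$ for $0\le y<\alpha$ and $\Psi(y)=\frac23\alpha^3+\alpha^2(y-\alpha)+(y-\alpha)^3$ for $y\ge\alpha$. A Young function is an even convex $\Psi:\mathbb R\to[0,\infty)$ with $\Psi(x)=0\iff x=0$, $\Psi(x)/x\to0$ as $x\to0$, $\Psi(x)/x\to\infty$ as $x\to\infty$. $\mathcal L^\Psi=\{f:\int\Psi(af)<\infty\text{ for some }a>0\}$, $N_\Psi(f)=\inf\{\lambda>0:\int\Psi(f/\lambda)\le1\}$. *)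

theory Defs
  imports "HOL-Analysis.Analysis"
begin

definition Psi :: "real \<Rightarrow> real \<Rightarrow> real" where
  "Psi \<alpha> y = (let t = \<bar>y\<bar> in
     if t < \<alpha> then \<alpha> * t^2 - t^3 / 3
     else 2/3 * \<alpha>^3 + \<alpha>^2 * (t - \<alpha>) + (t - \<alpha>)^3)"

definition strictly_convex_on :: "real set \<Rightarrow> (real \<Rightarrow> real) \<Rightarrow> bool" where
  "strictly_convex_on S f \<longleftrightarrow> convex S \<and>
     (\<forall>x\<in>S. \<forall>y\<in>S. \<forall>u. x \<noteq> y \<and> 0 < u \<and> u < 1 \<longrightarrow>
        f (u * x + (1 - u) * y) < u * f x + (1 - u) * f y)"

definition young_function :: "(real \<Rightarrow> real) \<Rightarrow> bool" where
  "young_function \<Psi> \<longleftrightarrow>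
     (\<forall>x. \<Psi> (-x) = \<Psi> x) \<and> convex_on UNIV \<Psi> \<and> (\<forall>x. 0 \<le> \<Psi> x) \<and>
     (\<forall>x. \<Psi> x = 0 \<longleftrightarrow> x = 0) \<and>
     ((\<lambda>x. \<Psi> x / x) \<longlongrightarrow> 0) (at 0) \<and>
     filterlim (\<lambda>x. \<Psi> x / x) at_top at_top"

definition C2 :: "(real \<Rightarrow> real) \<Rightarrow> bool" where
  "C2 f \<longleftrightarrow> (\<exists>f' f''. (\<forall>x. (f has_real_derivative f' x) (at x)) \<and>
                     (\<forall>x. (f' has_real_derivative f'' x) (at x)) \<and>
                     continuous_on UNIV f'')"

definition orlicz :: "(real \<Rightarrow> real) \<Rightarrow> (real \<Rightarrow> real) set" where
  "orlicz \<Psi> = {f. f \<in> borel_measurable lebesgue \<and>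
     (\<exists>a>0. (\<integral>\<^sup>+ x. ennreal (\<Psi> (a * f x)) \<partial>lebesgue) < \<infinity>)}"

definition gauge_norm :: "(real \<Rightarrow> real) \<Rightarrow> (real \<Rightarrow> real) \<Rightarrow> real" where
  "gauge_norm \<Psi> f = Inf {l. l > 0 \<and>
     (\<integral>\<^sup>+ x. ennreal (\<Psi> (f x / l)) \<partial>lebesgue) \<le> 1}"

definition Lp_space :: "real \<Rightarrow> (real \<Rightarrow> real) set" where
  "Lp_space p = {f. f \<in> borel_measurable lebesgue \<and>
     (\<integral>\<^sup>+ x. ennreal (\<bar>f x\<bar> powr p) \<partial>lebesgue) < \<infinity>}"

definition Lp_norm :: "real \<Rightarrow> (real \<Rightarrow> real) \<Rightarrow> real" where
  "Lp_norm p f = (enn2real (\<integral>\<^sup>+ x. ennreal (\<bar>f x\<bar> powr p) \<partial>lebesgue)) powr (1 / p)"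

end

(*
  Psi is a piecewise cubic with Psi'' = 2 (alpha - |y|) on [-alpha, alpha] and 6 (|y| - alpha)
  outside, so Psi' is strictly increasing; this gives strict convexity and the C^2 property.
  The two-sided bound (alpha y^2 + |y|^3) / 6 <= Psi y <= alpha y^2 + |y|^3 makes the modular
  l |-> int Psi (f / l) comparable to alpha ||f||_2^2 / l^2 + ||f||_3^3 / l^3, which yields
  L^Psi = L^2 \<inter> L^3 and the equivalence of N_Psi with max (||f||_2, ||f||_3). The L^2 estimate
  only uses alpha y^2 / 6 <= Psi y and the L^3 estimate only |y|^3 / 6 <= Psi y, so both hold
  with constants independent of alpha. Finally y Psi' y <= 4 Psi y gives the Delta_2 bound
  Psi (m y) <= m^4 Psi y, so the modular is continuous in l; by convexity it is strictly
  decreasing where it is positive and finite, hence N_Psi f is the unique l with modular 1.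
*)
theory Submission
  imports Defs
begin

lemma strictly_convex_on_UNIV_if_deriv_strict_mono:
  fixes f f' :: "real \<Rightarrow> real"
  assumes deriv: "\<And>x. (f has_real_derivative f' x) (at x)" and mono: "strict_mono f'"
  shows "strictly_convex_on UNIV f"
  unfolding strictly_convex_on_def
proof (intro conjI ballI allI impI)
  have less: "f (u * x + (1 - u) * y) < u * f x + (1 - u) * f y"
    if xy: "x < y" and u: "0 < u" "u < 1" for x y u :: real
  proof -
    define z where "z = u * x + (1 - u) * y"
    have zx: "z - x = (1 - u) * (y - x)" and yz: "y - z = u * (y - x)"
      unfolding z_def by (simp_all add: algebra_simps)
    have "0 < z - x" "0 < y - z"
      unfolding zx yz using xy u by simp_all
    then have "x < z" "z < y" by simp_all
    obtain p where p: "p < z" "f z - f x = (z - x) * f' p"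
      using MVT2[OF \<open>x < z\<close>, of f f'] deriv by blast
    obtain q where q: "z < q" "f y - f z = (y - z) * f' q"
      using MVT2[OF \<open>z < y\<close>, of f f'] deriv by blast
    have "u * f x + (1 - u) * f y - f z = (1 - u) * (f y - f z) - u * (f z - f x)"
      by (simp add: algebra_simps)
    also have "\<dots> = u * (1 - u) * (y - x) * (f' q - f' p)"
      unfolding p(2) q(2) zx yz by (simp add: algebra_simps)
    also have "\<dots> > 0"
      using mono p(1) q(1) xy u by (intro mult_pos_pos) (auto simp: strict_mono_less)
    finally show ?thesis unfolding z_def by simp
  qed
  fix x y u :: real assume "x \<noteq> y \<and> 0 < u \<and> u < 1"
  then show "f (u * x + (1 - u) * y) < u * f x + (1 - u) * f y"
    using less[of x y u] less[of y x "1 - u"] by (cases "x < y") (auto simp: algebra_simps)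
qed simp

text \<open>If \<open>t \<phi>'(t) \<le> p \<phi>(t)\<close>, then \<open>\<phi>(t) / t\<^sup>p\<close> is nonincreasing.\<close>

lemma mult_le_power_if_elasticity_le:
  fixes \<phi> \<phi>' :: "real \<Rightarrow> real" and p :: nat
  assumes deriv: "\<And>x. 0 < x \<Longrightarrow> (\<phi> has_real_derivative \<phi>' x) (at x)"
    and elasticity: "\<And>x. 0 < x \<Longrightarrow> x * \<phi>' x \<le> p * \<phi> x"
    and t: "0 < t" and m: "1 \<le> m"
  shows "\<phi> (m * t) \<le> m^p * \<phi> t"
proof -
  define g where "g x = \<phi> x / x^p" for x
  have "g (m * t) \<le> g t"
  proof (rule DERIV_nonpos_imp_nonincreasing[of t "m * t" g])
    show "t \<le> m * t" using m t by simp
    fix x assume "t \<le> x" "x \<le> m * t"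
    then have x: "0 < x" using t by simp
    define d where "d = \<phi>' x * x^p - \<phi> x * (p * x^(p - 1))"
    have "(g has_real_derivative d / (x^p * x^p)) (at x)"
      unfolding g_def [abs_def] d_def using x
      by (auto intro!: derivative_eq_intros deriv)
    moreover have "x * d = x^p * (x * \<phi>' x - p * \<phi> x)"
      unfolding d_def by (cases p) (simp_all add: algebra_simps)
    then have "x * d \<le> 0"
      using elasticity[OF x] x by (simp add: mult_nonneg_nonpos)
    then have "d \<le> 0"
      using x by (simp add: mult_le_0_iff)
    ultimately show "\<exists>y. (g has_real_derivative y) (at x) \<and> y \<le> 0"
      by (intro exI[of _ "d / (x^p * x^p)"]) (simp add: divide_nonpos_nonneg)
  qed
  then show ?thesis
    using t m unfolding g_def by (simp add: field_simps power_mult_distrib)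
qed

lemma le_if_le_power_mult:
  fixes x y :: real
  assumes "\<And>m. 1 < m \<Longrightarrow> x \<le> m^p * y"
  shows "x \<le> y"
proof -
  have "((\<lambda>m::real. m^p * y) \<longlongrightarrow> 1^p * y) (at_right 1)"
    by (intro tendsto_intros)
  moreover have "eventually (\<lambda>m. x \<le> m^p * y) (at_right (1::real))"
    by (rule eventually_at_rightI[of 1 2]) (auto intro: assms)
  ultimately show ?thesis
    by (intro tendsto_lowerbound[of "\<lambda>m. m^p * y" y "at_right 1"]) auto
qed

section \<open>The gauge norm of a Young function\<close>

definition modular :: "(real \<Rightarrow> real) \<Rightarrow> (real \<Rightarrow> real) \<Rightarrow> real \<Rightarrow> ennreal" where
  "modular \<Phi> f l = (\<integral>\<^sup>+ x. ennreal (\<Phi> (f x / l)) \<partial>lebesgue)"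

definition gauge_set :: "(real \<Rightarrow> real) \<Rightarrow> (real \<Rightarrow> real) \<Rightarrow> real set" where
  "gauge_set \<Phi> f = {l. 0 < l \<and> modular \<Phi> f l \<le> 1}"

lemma gauge_norm_eq_Inf: "gauge_norm \<Phi> f = Inf (gauge_set \<Phi> f)"
  unfolding gauge_norm_def gauge_set_def modular_def ..

lemma bdd_below_gauge_set: "bdd_below (gauge_set \<Phi> f)"
  by (rule bdd_belowI[of _ 0]) (auto simp: gauge_set_def)

lemma gauge_norm_le:
  assumes "0 < l" "modular \<Phi> f l \<le> 1"
  shows "gauge_norm \<Phi> f \<le> l"
  unfolding gauge_norm_eq_Inf
  by (rule cInf_lower[OF _ bdd_below_gauge_set]) (use assms in \<open>simp add: gauge_set_def\<close>)

lemma modular_inverse: "0 < a \<Longrightarrow> modular \<Phi> f (1 / a) = (\<integral>\<^sup>+ x. ennreal (\<Phi> (a * f x)) \<partial>lebesgue)"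
  unfolding modular_def by (simp add: mult.commute)

locale young =
  fixes \<Phi> :: "real \<Rightarrow> real"
  assumes young_function: "young_function \<Phi>"
begin

lemma even: "\<Phi> (- x) = \<Phi> x"
  and convex: "convex_on UNIV \<Phi>"
  and nonneg: "0 \<le> \<Phi> x"
  and eq_0_iff: "\<Phi> x = 0 \<longleftrightarrow> x = 0"
  using young_function unfolding young_function_def by auto

lemma zero [simp]: "\<Phi> 0 = 0"
  using eq_0_iff by simp

lemma abs_eq: "\<Phi> \<bar>x\<bar> = \<Phi> x"
  by (cases "0 \<le> x") (simp_all add: even)

lemma borel_measurable [measurable]: "\<Phi> \<in> borel_measurable borel"
  using convex_on_continuous[OF open_UNIV convex] by (rule borel_measurable_continuous_onI)

lemma mult_le: "0 \<le> u \<Longrightarrow> u \<le> 1 \<Longrightarrow> \<Phi> (u * x) \<le> u * \<Phi> x"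
  using convex_onD[OF convex, of u 0 x] by simp

lemma mono_abs:
  assumes "\<bar>x\<bar> \<le> \<bar>y\<bar>"
  shows "\<Phi> x \<le> \<Phi> y"
proof (cases "y = 0")
  case False
  have "\<Phi> x = \<Phi> (\<bar>x\<bar> / \<bar>y\<bar> * \<bar>y\<bar>)"
    using False by (simp add: abs_eq)
  also have "\<dots> \<le> \<bar>x\<bar> / \<bar>y\<bar> * \<Phi> \<bar>y\<bar>"
    using assms False by (intro mult_le) auto
  also have "\<dots> \<le> \<Phi> y"
    using mult_left_le_one_le[OF nonneg[of y], of "\<bar>x\<bar> / \<bar>y\<bar>"] assms False by (simp add: abs_eq)
  finally show ?thesis .
qed (use assms in simp)

lemma convex_combination_le:
  "0 \<le> u \<Longrightarrow> u \<le> 1 \<Longrightarrow> \<Phi> (u * x + (1 - u) * y) \<le> u * \<Phi> x + (1 - u) * \<Phi> y"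
  using convex_onD[OF convex, of "1 - u" x y] by simp

lemma modular_antimono:
  assumes "0 < l" "l \<le> l'"
  shows "modular \<Phi> f l' \<le> modular \<Phi> f l"
  unfolding modular_def
  using assms by (intro nn_integral_mono ennreal_leI mono_abs)
                 (simp add: abs_divide divide_left_mono)

lemma modular_mult_le:
  assumes f: "f \<in> borel_measurable lebesgue" and "0 < l" "1 \<le> m"
  shows "modular \<Phi> f (m * l) \<le> ennreal (1 / m) * modular \<Phi> f l"
proof -
  have "modular \<Phi> f (m * l) \<le> (\<integral>\<^sup>+ x. ennreal (1 / m) * ennreal (\<Phi> (f x / l)) \<partial>lebesgue)"
    unfolding modular_def
  proof (intro nn_integral_mono)
    fix x
    have "\<Phi> (f x / (m * l)) \<le> 1 / m * \<Phi> (f x / l)"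
      using mult_le[of "1 / m" "f x / l"] assms by simp
    then have "ennreal (\<Phi> (f x / (m * l))) \<le> ennreal (1 / m * \<Phi> (f x / l))"
      by (rule ennreal_leI)
    also have "\<dots> = ennreal (1 / m) * ennreal (\<Phi> (f x / l))"
      using assms nonneg by (intro ennreal_mult) auto
    finally show "ennreal (\<Phi> (f x / (m * l))) \<le> ennreal (1 / m) * ennreal (\<Phi> (f x / l))" .
  qed
  also have "\<dots> = ennreal (1 / m) * modular \<Phi> f l"
    unfolding modular_def using f by (intro nn_integral_cmult) simp
  finally show ?thesis .
qed

lemma orlicz_iff_gauge_set:
  "f \<in> orlicz \<Phi> \<longleftrightarrow> f \<in> borel_measurable lebesgue \<and> gauge_set \<Phi> f \<noteq> {}"
proof
  assume "f \<in> orlicz \<Phi>"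
  then obtain a where f: "f \<in> borel_measurable lebesgue" and a: "0 < a"
    and finite: "modular \<Phi> f (1 / a) < \<infinity>"
    unfolding orlicz_def by (auto simp: modular_inverse)
  define M where "M = enn2real (modular \<Phi> f (1 / a))"
  define m where "m = max 1 M"
  have "modular \<Phi> f (m * (1 / a)) \<le> ennreal (1 / m) * modular \<Phi> f (1 / a)"
    using a by (intro modular_mult_le f) (auto simp: m_def)
  also have "\<dots> = ennreal (1 / m) * ennreal M"
    using finite by (simp add: M_def less_top)
  also have "\<dots> = ennreal (1 / m * M)"
    by (rule ennreal_mult[symmetric]) (auto simp: m_def M_def)
  also have "\<dots> \<le> 1"
    by (simp add: m_def divide_le_eq)
  finally have "m * (1 / a) \<in> gauge_set \<Phi> f"
    using a by (auto simp: gauge_set_def m_def)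
  then show "f \<in> borel_measurable lebesgue \<and> gauge_set \<Phi> f \<noteq> {}"
    using f by blast
next
  assume "f \<in> borel_measurable lebesgue \<and> gauge_set \<Phi> f \<noteq> {}"
  then obtain l where f: "f \<in> borel_measurable lebesgue" and "0 < l" "modular \<Phi> f (1 / (1 / l)) \<le> 1"
    by (auto simp: gauge_set_def)
  then show "f \<in> orlicz \<Phi>"
    unfolding orlicz_def using modular_inverse[of "1 / l" \<Phi> f]
    by (auto intro!: exI[of _ "1 / l"] simp: top.not_eq_extremum le_less_trans)
qed

lemma gauge_set_nonempty: "f \<in> orlicz \<Phi> \<Longrightarrow> gauge_set \<Phi> f \<noteq> {}"
  and borel_measurable_orlicz: "f \<in> orlicz \<Phi> \<Longrightarrow> f \<in> borel_measurable lebesgue"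
  by (simp_all add: orlicz_iff_gauge_set)

lemma mem_gauge_set_if_gauge_norm_less:
  assumes f: "f \<in> orlicz \<Phi>" and less: "gauge_norm \<Phi> f < l"
  shows "0 < l" "modular \<Phi> f l \<le> 1"
proof -
  obtain k where k: "k \<in> gauge_set \<Phi> f" "k < l"
    using less cInf_less_iff[OF gauge_set_nonempty[OF f] bdd_below_gauge_set]
    unfolding gauge_norm_eq_Inf by blast
  then have "0 < k" "modular \<Phi> f k \<le> 1"
    by (simp_all add: gauge_set_def)
  then show "0 < l" "modular \<Phi> f l \<le> 1"
    using modular_antimono[of k l f] k(2) by simp_all
qed

lemma gauge_norm_nonneg: "f \<in> orlicz \<Phi> \<Longrightarrow> 0 \<le> gauge_norm \<Phi> f"
  unfolding gauge_norm_eq_Inf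
  by (rule cInf_greatest[OF gauge_set_nonempty]) (auto simp: gauge_set_def)

lemma gauge_norm_greatest:
  assumes "f \<in> orlicz \<Phi>" and "\<And>l. 0 < l \<Longrightarrow> modular \<Phi> f l \<le> 1 \<Longrightarrow> c \<le> l"
  shows "c \<le> gauge_norm \<Phi> f"
  unfolding gauge_norm_eq_Inf
  by (rule cInf_greatest[OF gauge_set_nonempty]) (use assms in \<open>auto simp: gauge_set_def\<close>)

lemma modular_eq_0_iff:
  assumes f: "f \<in> borel_measurable lebesgue" and l: "l \<noteq> 0"
  shows "modular \<Phi> f l = 0 \<longleftrightarrow> (AE x in lebesgue. f x = 0)"
proof -
  have "modular \<Phi> f l = 0 \<longleftrightarrow> (AE x in lebesgue. ennreal (\<Phi> (f x / l)) = 0)"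
    unfolding modular_def using f by (intro nn_integral_0_iff_AE) simp
  also have "\<dots> \<longleftrightarrow> (AE x in lebesgue. f x = 0)"
    using l by (intro AE_cong) (metis divide_eq_0_iff ennreal_eq_0_iff eq_0_iff nonneg order.antisym)
  finally show ?thesis .
qed

lemma modular_1_eq_0_if_gauge_norm_eq_0:
  assumes f: "f \<in> orlicz \<Phi>" and zero: "gauge_norm \<Phi> f = 0"
  shows "modular \<Phi> f 1 = 0"
proof -
  have eps: "modular \<Phi> f 1 \<le> ennreal e" if "0 < e" for e
  proof -
    define l where "l = min e 1"
    have l: "0 < l" "l \<le> 1"
      using that by (simp_all add: l_def)
    have "modular \<Phi> f 1 \<le> ennreal l * modular \<Phi> f l"
      using modular_mult_le[OF borel_measurable_orlicz[OF f], of l "1 / l"] l by simp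
    also have "\<dots> \<le> ennreal l * 1"
      using mem_gauge_set_if_gauge_norm_less(2)[OF f, of l] l zero
      by (intro mult_left_mono) simp_all
    also have "\<dots> \<le> ennreal e"
      by (simp add: l_def ennreal_leI)
    finally show ?thesis .
  qed
  have "modular \<Phi> f 1 \<le> 0"
    by (rule ennreal_le_epsilon) (simp add: eps)
  then show ?thesis
    by simp
qed

lemma gauge_norm_eq_0_iff:
  assumes f: "f \<in> orlicz \<Phi>"
  shows "gauge_norm \<Phi> f = 0 \<longleftrightarrow> (AE x in lebesgue. f x = 0)"
proof
  assume "gauge_norm \<Phi> f = 0"
  then show "AE x in lebesgue. f x = 0"
    using modular_1_eq_0_if_gauge_norm_eq_0[OF f] modular_eq_0_iff[OF borel_measurable_orlicz[OF f]]
    by simp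
next
  assume "AE x in lebesgue. f x = 0"
  then have le: "gauge_norm \<Phi> f \<le> l" if "0 < l" for l
    using that modular_eq_0_iff[OF borel_measurable_orlicz[OF f], of l] by (intro gauge_norm_le) simp_all
  have "gauge_norm \<Phi> f \<le> 0"
    by (rule dense_ge) (rule le)
  then show "gauge_norm \<Phi> f = 0"
    using gauge_norm_nonneg[OF f] by simp
qed

lemma gauge_norm_pos_iff:
  "f \<in> orlicz \<Phi> \<Longrightarrow> 0 < gauge_norm \<Phi> f \<longleftrightarrow> \<not> (AE x in lebesgue. f x = 0)"
  using gauge_norm_nonneg gauge_norm_eq_0_iff by (simp add: less_le)

lemma modular_cmult:
  assumes "c \<noteq> 0"
  shows "modular \<Phi> (\<lambda>x. c * f x) (\<bar>c\<bar> * l) = modular \<Phi> f l"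
  unfolding modular_def
proof (intro nn_integral_cong arg_cong[where f = ennreal])
  fix x
  have "\<bar>c * f x / (\<bar>c\<bar> * l)\<bar> = \<bar>f x / l\<bar>"
    using assms by (simp add: abs_mult abs_divide)
  then show "\<Phi> (c * f x / (\<bar>c\<bar> * l)) = \<Phi> (f x / l)"
    by (metis abs_eq)
qed

lemma orlicz_cmult:
  assumes f: "f \<in> orlicz \<Phi>"
  shows "(\<lambda>x. c * f x) \<in> orlicz \<Phi>"
proof (cases "c = 0")
  case True
  then have "1 \<in> gauge_set \<Phi> (\<lambda>x. c * f x)"
    by (simp add: gauge_set_def modular_def)
  then show ?thesis
    using borel_measurable_orlicz[OF f] by (auto simp: orlicz_iff_gauge_set)
next
  case False
  obtain l where "l \<in> gauge_set \<Phi> f"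
    using gauge_set_nonempty[OF f] by blast
  then have "\<bar>c\<bar> * l \<in> gauge_set \<Phi> (\<lambda>x. c * f x)"
    using False by (simp add: gauge_set_def modular_cmult)
  then show ?thesis
    using borel_measurable_orlicz[OF f] by (auto simp: orlicz_iff_gauge_set)
qed

lemma abs_mult_gauge_norm_le:
  assumes f: "f \<in> orlicz \<Phi>" and c: "c \<noteq> 0"
  shows "\<bar>c\<bar> * gauge_norm \<Phi> f \<le> gauge_norm \<Phi> (\<lambda>x. c * f x)"
proof (rule gauge_norm_greatest[OF orlicz_cmult[OF f]])
  fix l assume l: "0 < l" "modular \<Phi> (\<lambda>x. c * f x) l \<le> 1"
  have "modular \<Phi> f (l / \<bar>c\<bar>) = modular \<Phi> (\<lambda>x. c * f x) l"
    using modular_cmult[OF c, of f "l / \<bar>c\<bar>"] c by simp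
  then have "gauge_norm \<Phi> f \<le> l / \<bar>c\<bar>"
    using l c by (intro gauge_norm_le) simp_all
  then show "\<bar>c\<bar> * gauge_norm \<Phi> f \<le> l"
    using c by (simp add: le_divide_eq mult.commute)
qed

lemma gauge_norm_cmult:
  assumes f: "f \<in> orlicz \<Phi>"
  shows "gauge_norm \<Phi> (\<lambda>x. c * f x) = \<bar>c\<bar> * gauge_norm \<Phi> f"
proof (cases "c = 0")
  case True
  then show ?thesis
    using gauge_norm_eq_0_iff[OF orlicz_cmult[OF f, of c]] by simp
next
  case False
  have "\<bar>1 / c\<bar> * gauge_norm \<Phi> (\<lambda>x. c * f x) \<le> gauge_norm \<Phi> (\<lambda>x. 1 / c * (c * f x))"
    using False by (intro abs_mult_gauge_norm_le orlicz_cmult f) simp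
  then have "gauge_norm \<Phi> (\<lambda>x. c * f x) \<le> \<bar>c\<bar> * gauge_norm \<Phi> f"
    using False by (simp add: divide_le_eq mult.commute)
  then show ?thesis
    using abs_mult_gauge_norm_le[OF f False] by simp
qed

lemma gauge_set_add:
  assumes f: "f \<in> borel_measurable lebesgue" and g: "g \<in> borel_measurable lebesgue"
    and l1: "l1 \<in> gauge_set \<Phi> f" and l2: "l2 \<in> gauge_set \<Phi> g"
  shows "l1 + l2 \<in> gauge_set \<Phi> (\<lambda>x. f x + g x)"
proof -
  have l1': "0 < l1" "modular \<Phi> f l1 \<le> 1" and l2': "0 < l2" "modular \<Phi> g l2 \<le> 1"
    using l1 l2 by (simp_all add: gauge_set_def)
  define u where "u = l1 / (l1 + l2)"
  have u: "0 \<le> u" "u \<le> 1" "1 - u = l2 / (l1 + l2)"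
    using l1' l2' by (simp_all add: u_def field_simps)
  have "modular \<Phi> (\<lambda>x. f x + g x) (l1 + l2)
      \<le> (\<integral>\<^sup>+ x. ennreal u * ennreal (\<Phi> (f x / l1)) + ennreal (1 - u) * ennreal (\<Phi> (g x / l2)) \<partial>lebesgue)"
    unfolding modular_def
  proof (intro nn_integral_mono)
    fix x
    have combination: "(f x + g x) / (l1 + l2) = u * (f x / l1) + (1 - u) * (g x / l2)"
      using l1' l2' u(3) by (simp add: u_def add_divide_distrib)
    have "\<Phi> ((f x + g x) / (l1 + l2)) \<le> u * \<Phi> (f x / l1) + (1 - u) * \<Phi> (g x / l2)"
      unfolding combination by (rule convex_combination_le[OF u(1,2)])
    then have "ennreal (\<Phi> ((f x + g x) / (l1 + l2)))
        \<le> ennreal (u * \<Phi> (f x / l1) + (1 - u) * \<Phi> (g x / l2))"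
      by (rule ennreal_leI)
    also have "\<dots> = ennreal u * ennreal (\<Phi> (f x / l1)) + ennreal (1 - u) * ennreal (\<Phi> (g x / l2))"
      using u(1,2) nonneg by (simp add: ennreal_plus ennreal_mult)
    finally show "ennreal (\<Phi> ((f x + g x) / (l1 + l2)))
        \<le> ennreal u * ennreal (\<Phi> (f x / l1)) + ennreal (1 - u) * ennreal (\<Phi> (g x / l2))" .
  qed
  also have "\<dots> = ennreal u * modular \<Phi> f l1 + ennreal (1 - u) * modular \<Phi> g l2"
    unfolding modular_def using f g by (simp add: nn_integral_add nn_integral_cmult)
  also have "\<dots> \<le> ennreal u * 1 + ennreal (1 - u) * 1"
    using l1' l2' by (intro add_mono mult_left_mono) simp_all
  also have "\<dots> = 1"
    using u by (simp add: ennreal_plus[symmetric] del: ennreal_plus)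
  finally show ?thesis
    using l1' l2' by (simp add: gauge_set_def)
qed

lemma orlicz_add:
  assumes f: "f \<in> orlicz \<Phi>" and g: "g \<in> orlicz \<Phi>"
  shows "(\<lambda>x. f x + g x) \<in> orlicz \<Phi>"
proof -
  obtain l1 l2 where "l1 \<in> gauge_set \<Phi> f" "l2 \<in> gauge_set \<Phi> g"
    using gauge_set_nonempty[OF f] gauge_set_nonempty[OF g] by blast
  then have "l1 + l2 \<in> gauge_set \<Phi> (\<lambda>x. f x + g x)"
    using f g by (intro gauge_set_add borel_measurable_orlicz)
  then show ?thesis
    using f g by (auto simp: orlicz_iff_gauge_set)
qed

lemma gauge_norm_triangle:
  assumes f: "f \<in> orlicz \<Phi>" and g: "g \<in> orlicz \<Phi>"
  shows "gauge_norm \<Phi> (\<lambda>x. f x + g x) \<le> gauge_norm \<Phi> f + gauge_norm \<Phi> g"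
proof (rule field_le_epsilon)
  fix e :: real assume "0 < e"
  then have "gauge_norm \<Phi> f + e / 2 \<in> gauge_set \<Phi> f" "gauge_norm \<Phi> g + e / 2 \<in> gauge_set \<Phi> g"
    using mem_gauge_set_if_gauge_norm_less f g by (simp_all add: gauge_set_def)
  then have "gauge_norm \<Phi> f + e / 2 + (gauge_norm \<Phi> g + e / 2) \<in> gauge_set \<Phi> (\<lambda>x. f x + g x)"
    using f g by (intro gauge_set_add borel_measurable_orlicz)
  then have "gauge_norm \<Phi> (\<lambda>x. f x + g x) \<le> gauge_norm \<Phi> f + e / 2 + (gauge_norm \<Phi> g + e / 2)"
    by (intro gauge_norm_le) (simp_all add: gauge_set_def)
  then show "gauge_norm \<Phi> (\<lambda>x. f x + g x) \<le> gauge_norm \<Phi> f + gauge_norm \<Phi> g + e"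
    by simp
qed

end

locale young_delta2 = young +
  fixes p :: nat
  assumes mult_le_power: "1 \<le> m \<Longrightarrow> \<Phi> (m * y) \<le> m^p * \<Phi> y"
begin

lemma modular_le_power_mult:
  assumes f: "f \<in> borel_measurable lebesgue" and "0 < l" "1 \<le> m"
  shows "modular \<Phi> f l \<le> ennreal (m^p) * modular \<Phi> f (m * l)"
proof -
  have "modular \<Phi> f l \<le> (\<integral>\<^sup>+ x. ennreal (m^p) * ennreal (\<Phi> (f x / (m * l))) \<partial>lebesgue)"
    unfolding modular_def
  proof (intro nn_integral_mono)
    fix x
    have "\<Phi> (f x / l) = \<Phi> (m * (f x / (m * l)))"
      using assms by simp
    also have "\<dots> \<le> m^p * \<Phi> (f x / (m * l))"
      using assms by (intro mult_le_power)
    finally show "ennreal (\<Phi> (f x / l)) \<le> ennreal (m^p) * ennreal (\<Phi> (f x / (m * l)))"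
      using assms nonneg by (simp add: ennreal_mult[symmetric] ennreal_leI)
  qed
  also have "\<dots> = ennreal (m^p) * modular \<Phi> f (m * l)"
    unfolding modular_def using f by (intro nn_integral_cmult) simp
  finally show ?thesis .
qed

lemma modular_gauge_norm:
  assumes f: "f \<in> orlicz \<Phi>" and pos: "0 < gauge_norm \<Phi> f"
  shows "modular \<Phi> f (gauge_norm \<Phi> f) = 1"
proof -
  define N where "N = gauge_norm \<Phi> f"
  have f_meas: "f \<in> borel_measurable lebesgue"
    using borel_measurable_orlicz[OF f] .
  have upper: "modular \<Phi> f N \<le> ennreal (m^p)" if m: "1 < m" for m
  proof -
    have "modular \<Phi> f N \<le> ennreal (m^p) * modular \<Phi> f (m * N)"
      using pos m by (intro modular_le_power_mult f_meas) (simp_all add: N_def)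
    also have "\<dots> \<le> ennreal (m^p) * 1"
      using pos m by (intro mult_left_mono mem_gauge_set_if_gauge_norm_less(2)[OF f]) (simp_all add: N_def)
    finally show ?thesis by simp
  qed
  have lower: "1 < ennreal (m^p) * modular \<Phi> f N" if m: "1 < m" for m
  proof -
    have "\<not> modular \<Phi> f (N / m) \<le> 1"
      using gauge_norm_le[of "N / m" \<Phi> f] pos m by (auto simp: N_def field_simps)
    moreover have "modular \<Phi> f (N / m) \<le> ennreal (m^p) * modular \<Phi> f (m * (N / m))"
      using pos m by (intro modular_le_power_mult f_meas) (simp_all add: N_def)
    ultimately show ?thesis
      using m by simp
  qed
  obtain r where r: "modular \<Phi> f N = ennreal r" "0 \<le> r"
    using upper[of 2] by (cases "modular \<Phi> f N" rule: ennreal_cases) (auto simp: top_unique)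
  have "r \<le> 1"
    using upper r by (intro le_if_le_power_mult[of r p 1]) (simp add: ennreal_le_iff)
  moreover have "1 \<le> r"
    using lower r by (intro le_if_le_power_mult[of 1 p r])
                     (simp add: ennreal_mult[symmetric] ennreal_less_iff less_imp_le)
  ultimately show ?thesis
    using r by (simp add: N_def)
qed

lemma gauge_norm_unique:
  assumes f: "f \<in> orlicz \<Phi>" and pos: "0 < gauge_norm \<Phi> f"
    and l: "0 < l" and one: "modular \<Phi> f l = 1"
  shows "l = gauge_norm \<Phi> f"
proof (rule ccontr)
  define N where "N = gauge_norm \<Phi> f"
  assume "l \<noteq> gauge_norm \<Phi> f"
  moreover have "N \<le> l"
    unfolding N_def using l one by (intro gauge_norm_le) simp_all
  ultimately have less: "N < l"
    by (simp add: N_def)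
  have "modular \<Phi> f (l / N * N) \<le> ennreal (1 / (l / N)) * modular \<Phi> f N"
    using pos less by (intro modular_mult_le borel_measurable_orlicz[OF f]) (simp_all add: N_def)
  also have "\<dots> = ennreal (N / l)"
    using modular_gauge_norm[OF f pos] by (simp add: N_def)
  finally have "1 \<le> ennreal (N / l)"
    using pos one by (simp add: N_def)
  then show False
    using less pos by (simp add: N_def divide_le_eq)
qed

end

lemma Lp_norm_nonneg: "0 \<le> Lp_norm p f"
  by (simp add: Lp_norm_def)

lemma nn_integral_powr_eq_Lp_norm:
  assumes "f \<in> Lp_space p" "0 < p"
  shows "(\<integral>\<^sup>+ x. ennreal (\<bar>f x\<bar> powr p) \<partial>lebesgue) = ennreal (Lp_norm p f powr p)"
proof -
  define I where "I = (\<integral>\<^sup>+ x. ennreal (\<bar>f x\<bar> powr p) \<partial>lebesgue)"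
  have "I = ennreal (enn2real I)"
    using assms(1) by (simp add: I_def Lp_space_def less_top)
  also have "enn2real I = Lp_norm p f powr p"
    using assms(2) by (simp add: Lp_norm_def I_def powr_powr)
  finally show ?thesis
    by (simp add: I_def)
qed

context young
begin

lemma modular_ge_nn_integral_powr:
  assumes lower: "\<And>y. c * \<bar>y\<bar> powr p \<le> \<Phi> y" and c: "0 \<le> c"
    and f: "f \<in> borel_measurable lebesgue" and l: "0 < l"
  shows "ennreal (c / l powr p) * (\<integral>\<^sup>+ x. ennreal (\<bar>f x\<bar> powr p) \<partial>lebesgue) \<le> modular \<Phi> f l"
proof -
  have "ennreal (c / l powr p) * (\<integral>\<^sup>+ x. ennreal (\<bar>f x\<bar> powr p) \<partial>lebesgue)
      = (\<integral>\<^sup>+ x. ennreal (c / l powr p) * ennreal (\<bar>f x\<bar> powr p) \<partial>lebesgue)"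
    using f by (intro nn_integral_cmult[symmetric]) simp
  also have "\<dots> \<le> modular \<Phi> f l"
    unfolding modular_def
  proof (intro nn_integral_mono)
    fix x
    have "c / l powr p * \<bar>f x\<bar> powr p = c * \<bar>f x / l\<bar> powr p"
      using l by (simp add: abs_divide powr_divide)
    also have "\<dots> \<le> \<Phi> (f x / l)"
      by (rule lower)
    finally show "ennreal (c / l powr p) * ennreal (\<bar>f x\<bar> powr p) \<le> ennreal (\<Phi> (f x / l))"
      using c by (simp add: ennreal_mult[symmetric] ennreal_leI)
  qed
  finally show ?thesis .
qed

lemma orlicz_subset_Lp_space:
  assumes lower: "\<And>y. c * \<bar>y\<bar> powr p \<le> \<Phi> y" and c: "0 < c"
  shows "orlicz \<Phi> \<subseteq> Lp_space p"
proof
  fix f assume f: "f \<in> orlicz \<Phi>"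
  obtain l where l: "0 < l" "modular \<Phi> f l \<le> 1"
    using gauge_set_nonempty[OF f] by (auto simp: gauge_set_def)
  then have "ennreal (c / l powr p) * (\<integral>\<^sup>+ x. ennreal (\<bar>f x\<bar> powr p) \<partial>lebesgue) < \<infinity>"
    using modular_ge_nn_integral_powr[OF lower _ borel_measurable_orlicz[OF f] l(1)] c
    by (simp add: le_less_trans)
  then have "(\<integral>\<^sup>+ x. ennreal (\<bar>f x\<bar> powr p) \<partial>lebesgue) < \<infinity>"
    using c l by (auto simp: ennreal_mult_less_top)
  then show "f \<in> Lp_space p"
    using borel_measurable_orlicz[OF f] by (simp add: Lp_space_def)
qed

lemma Lp_norm_le_gauge_norm:
  assumes lower: "\<And>y. c * \<bar>y\<bar> powr p \<le> \<Phi> y" and c: "0 < c" and p: "0 < p"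
    and f: "f \<in> orlicz \<Phi>"
  shows "Lp_norm p f \<le> c powr (- 1 / p) * gauge_norm \<Phi> f"
proof -
  have f_Lp: "f \<in> Lp_space p"
    using orlicz_subset_Lp_space[OF lower c] f by blast
  have "Lp_norm p f / c powr (- 1 / p) \<le> gauge_norm \<Phi> f"
  proof (rule gauge_norm_greatest[OF f])
    fix l assume l: "0 < l" "modular \<Phi> f l \<le> 1"
    have "ennreal (c / l powr p) * ennreal (Lp_norm p f powr p) \<le> 1"
      using modular_ge_nn_integral_powr[OF lower _ borel_measurable_orlicz[OF f] l(1)] c l(2)
      by (simp add: nn_integral_powr_eq_Lp_norm[OF f_Lp p])
    then have "c / l powr p * Lp_norm p f powr p \<le> 1"
      using c by (simp add: ennreal_mult[symmetric])
    then have "Lp_norm p f powr p \<le> l powr p / c"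
      using c l by (simp add: field_simps)
    then have "(Lp_norm p f powr p) powr (1 / p) \<le> (l powr p / c) powr (1 / p)"
      using p by (intro powr_mono2) simp_all
    then have "Lp_norm p f \<le> l * c powr (- 1 / p)"
      using c l p by (simp add: powr_powr powr_divide powr_minus_divide Lp_norm_def)
    then show "Lp_norm p f / c powr (- 1 / p) \<le> l"
      using c by (simp add: divide_le_eq mult.commute)
  qed
  then show ?thesis
    using c by (simp add: divide_le_eq mult.commute)
qed

lemma modular_le_Lp_norm:
  assumes upper: "\<And>y. \<Phi> y \<le> A * \<bar>y\<bar> powr p + B * \<bar>y\<bar> powr q" and "0 \<le> A" "0 \<le> B"
    and "0 < p" "0 < q" and f: "f \<in> Lp_space p" "f \<in> Lp_space q" and l: "0 < l"
  shows "modular \<Phi> f l \<le> ennreal (A * (Lp_norm p f / l) powr p + B * (Lp_norm q f / l) powr q)"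
proof -
  have f_meas: "f \<in> borel_measurable lebesgue"
    using f by (simp add: Lp_space_def)
  have "modular \<Phi> f l \<le> (\<integral>\<^sup>+ x. ennreal (A / l powr p) * ennreal (\<bar>f x\<bar> powr p)
      + ennreal (B / l powr q) * ennreal (\<bar>f x\<bar> powr q) \<partial>lebesgue)"
    unfolding modular_def
  proof (intro nn_integral_mono)
    fix x
    have "\<Phi> (f x / l) \<le> A / l powr p * \<bar>f x\<bar> powr p + B / l powr q * \<bar>f x\<bar> powr q"
      using upper[of "f x / l"] l by (simp add: abs_divide powr_divide)
    then show "ennreal (\<Phi> (f x / l)) \<le> ennreal (A / l powr p) * ennreal (\<bar>f x\<bar> powr p)
        + ennreal (B / l powr q) * ennreal (\<bar>f x\<bar> powr q)"
      using assms by (simp add: ennreal_mult[symmetric] ennreal_plus[symmetric] ennreal_leI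
          del: ennreal_plus)
  qed
  also have "\<dots> = ennreal (A / l powr p) * ennreal (Lp_norm p f powr p)
      + ennreal (B / l powr q) * ennreal (Lp_norm q f powr q)"
    using f_meas assms
    by (simp add: nn_integral_add nn_integral_cmult nn_integral_powr_eq_Lp_norm[symmetric])
  also have "\<dots> = ennreal (A * (Lp_norm p f / l) powr p + B * (Lp_norm q f / l) powr q)"
    using assms by (simp add: ennreal_mult[symmetric] ennreal_plus[symmetric] powr_divide Lp_norm_def
        del: ennreal_plus)
  finally show ?thesis .
qed

lemma Lp_space_inter_subset_orlicz:
  assumes upper: "\<And>y. \<Phi> y \<le> A * \<bar>y\<bar> powr p + B * \<bar>y\<bar> powr q" and "0 \<le> A" "0 \<le> B"
    and "0 < p" "0 < q"
  shows "Lp_space p \<inter> Lp_space q \<subseteq> orlicz \<Phi>"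
proof
  fix f assume "f \<in> Lp_space p \<inter> Lp_space q"
  then have "modular \<Phi> f 1 < \<infinity>" "f \<in> borel_measurable lebesgue"
    using modular_le_Lp_norm[OF assms, of f 1] by (auto simp: Lp_space_def le_less_trans)
  then show "f \<in> orlicz \<Phi>"
    unfolding orlicz_def by (auto simp: modular_def intro!: exI[of _ 1])
qed

end

section \<open>The function Psi\<close>

definition signed_sq :: "real \<Rightarrow> real" where
  "signed_sq w = w * \<bar>w\<bar>"

lemma DERIV_signed_sq: "(signed_sq has_real_derivative 2 * \<bar>x\<bar>) (at x)"
proof -
  consider "x < 0" | "x = 0" | "x > 0" by linarith
  then show ?thesis
  proof cases
    case 1
    have "((\<lambda>w. - (w * w)) has_real_derivative 2 * \<bar>x\<bar>) (at x)"
      using 1 by (auto intro!: derivative_eq_intros)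
    then show ?thesis
      by (rule has_field_derivative_transform_within_open[where S="{..<0}"])
         (use 1 in \<open>auto simp: signed_sq_def\<close>)
  next
    case 2
    have "eventually (\<lambda>h. \<bar>h\<bar> = (signed_sq (x + h) - signed_sq x) / h) (at 0)"
      by (rule always_eventually) (auto simp: 2 signed_sq_def)
    then have "((\<lambda>h. (signed_sq (x + h) - signed_sq x) / h) \<longlongrightarrow> 2 * \<bar>x\<bar>) (at 0)"
      using tendsto_rabs[OF tendsto_ident_at[of 0 UNIV]] by (simp add: 2 tendsto_cong)
    then show ?thesis by (simp add: DERIV_def)
  next
    case 3
    have "((\<lambda>w. w * w) has_real_derivative 2 * \<bar>x\<bar>) (at x)"
      using 3 by (auto intro!: derivative_eq_intros)
    then show ?thesis
      by (rule has_field_derivative_transform_within_open[where S="{0<..}"])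
         (use 3 in \<open>auto simp: signed_sq_def\<close>)
  qed
qed

lemma DERIV_signed_sq_chain [derivative_intros]:
  "(f has_real_derivative f') (at x within S) \<Longrightarrow>
   ((\<lambda>x. signed_sq (f x)) has_real_derivative 2 * \<bar>f x\<bar> * f') (at x within S)"
  using DERIV_chain2[OF DERIV_signed_sq] by blast

definition Psi_deriv :: "real \<Rightarrow> real \<Rightarrow> real" where
  "Psi_deriv a y = - 6 * a * y - signed_sq y + 2 * signed_sq (y - a) - 2 * signed_sq (- y - a)"

text \<open>For \<open>a > 0\<close>,
  \<open>Psi a y = a y\<^sup>2 - \<bar>y\<bar>\<^sup>3 / 3 + 4/3 ((y - a)\<^sub>+\<^sup>3 + (- y - a)\<^sub>+\<^sup>3)\<close>,
  and \<open>\<bar>t\<bar>\<^sup>3 = t signed_sq t\<close>, \<open>t\<^sub>+\<^sup>3 = (t\<^sup>3 + t signed_sq t) / 2\<close>: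
  a single formula that can be differentiated symbolically.\<close>

lemma Psi_eq_signed_sq:
  assumes "0 < a"
  shows "Psi a = (\<lambda>y. a * y^2 - 1/3 * (y * signed_sq y) + 2/3 * ((y - a)^3
           + (y - a) * signed_sq (y - a) + (- y - a)^3 + (- y - a) * signed_sq (- y - a)))"
proof
  fix y
  show "Psi a y = a * y^2 - 1/3 * (y * signed_sq y) + 2/3 * ((y - a)^3
           + (y - a) * signed_sq (y - a) + (- y - a)^3 + (- y - a) * signed_sq (- y - a))"
    using assms unfolding Psi_def signed_sq_def Let_def
    by (cases "y \<ge> a"; cases "y \<ge> 0"; cases "y \<ge> -a")
       (auto simp: abs_if power2_eq_square power3_eq_cube field_simps)
qed

lemma DERIV_Psi:
  assumes "0 < a"
  shows "(Psi a has_real_derivative Psi_deriv a y) (at y)"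
  unfolding Psi_eq_signed_sq[OF assms]
  by (rule derivative_eq_intros refl | rule refl)+
     (simp add: Psi_deriv_def signed_sq_def power2_eq_square field_simps)

lemma DERIV_Psi_deriv:
  "(Psi_deriv a has_real_derivative - 6 * a - 2 * \<bar>y\<bar> + 4 * \<bar>y - a\<bar> + 4 * \<bar>y + a\<bar>) (at y)"
  unfolding Psi_deriv_def [abs_def]
  by (rule derivative_eq_intros refl | rule refl)+ (simp add: signed_sq_def field_simps)

lemma Psi_deriv_nonneg_eq:
  assumes "0 < a" "0 \<le> y"
  shows "Psi_deriv a y = (if y < a then 2 * a * y - y^2 else 3 * y^2 - 6 * a * y + 4 * a^2)"
  using assms unfolding Psi_deriv_def signed_sq_def
  by (auto simp: abs_if power2_eq_square algebra_simps)

lemma Psi_deriv_minus: "Psi_deriv a (- y) = - Psi_deriv a y"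
  unfolding Psi_deriv_def signed_sq_def by (auto simp: algebra_simps)

lemma Psi_deriv_zero: "Psi_deriv a 0 = 0"
  unfolding Psi_deriv_def signed_sq_def by simp

lemma Psi_deriv_less_nonneg:
  assumes "0 < a" "0 \<le> x" "x < y"
  shows "Psi_deriv a x < Psi_deriv a y"
proof -
  consider "y < a" | "x < a" "a \<le> y" | "a \<le> x" using assms by linarith
  then show ?thesis
  proof cases
    case 1
    have "0 < (y - x) * (2 * a - x - y)" using 1 assms by (intro mult_pos_pos) auto
    then show ?thesis using 1 assms by (simp add: Psi_deriv_nonneg_eq power2_eq_square algebra_simps)
  next
    case 2
    have "0 < (a - x)^2" "0 \<le> (y - a)^2" using 2 by simp_all
    then show ?thesis using 2 assms by (simp add: Psi_deriv_nonneg_eq power2_eq_square algebra_simps)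
  next
    case 3
    have "0 < (y - x) * (3 * (x + y) - 6 * a)" using 3 assms by (intro mult_pos_pos) auto
    then show ?thesis using 3 assms by (simp add: Psi_deriv_nonneg_eq power2_eq_square algebra_simps)
  qed
qed

lemma strict_mono_Psi_deriv:
  assumes "0 < a"
  shows "strict_mono (Psi_deriv a)"
proof (rule strict_monoI)
  fix x y :: real assume less: "x < y"
  then consider "0 \<le> x" | "x < 0" "0 \<le> y" | "y < 0" by linarith
  then show "Psi_deriv a x < Psi_deriv a y"
  proof cases
    case 2
    then have "Psi_deriv a 0 < Psi_deriv a (- x)" "Psi_deriv a 0 \<le> Psi_deriv a y"
      using Psi_deriv_less_nonneg[OF assms, of 0] by (auto simp: le_less)
    then show ?thesis by (simp add: Psi_deriv_minus Psi_deriv_zero)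
  qed (use Psi_deriv_less_nonneg[OF assms, of x y] Psi_deriv_less_nonneg[OF assms, of "- y" "- x"] less
       in \<open>auto simp: Psi_deriv_minus\<close>)
qed

lemma Psi_abs: "Psi a \<bar>y\<bar> = Psi a y"
  unfolding Psi_def by simp

lemma Psi_zero: "0 < a \<Longrightarrow> Psi a 0 = 0"
  unfolding Psi_def by simp

lemma Psi_bounds_nonneg:
  assumes a: "0 < a" and t: "0 \<le> t"
  shows "a * t^2 + t^3 \<le> 6 * Psi a t" "Psi a t \<le> a * t^2 + t^3"
proof -
  have "a * t^2 + t^3 \<le> 6 * Psi a t \<and> Psi a t \<le> a * t^2 + t^3"
  proof (cases "t < a")
    case True
    have "t^3 \<le> a * t^2"
      using True t mult_right_mono[of t a "t^2"] by (simp add: power2_eq_square power3_eq_cube)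
    moreover have "0 \<le> t^3" "Psi a t = a * t^2 - t^3 / 3"
      using True t unfolding Psi_def by simp_all
    ultimately show ?thesis by (intro conjI; linarith)
  next
    case False
    define s where "s = t - a"
    have "0 \<le> s" using False s_def by simp
    then have "0 \<le> s * ((a - 2 * s) * (a - 2 * s))" "0 \<le> a * s * s" "0 \<le> a * a * s"
      "0 \<le> a * a * a" "0 \<le> s * s * s"
      using a by simp_all
    moreover have "t = a + s" "Psi a t = 2/3 * a^3 + a^2 * s + s^3"
      using False t unfolding Psi_def s_def by simp_all
    ultimately show ?thesis by (simp add: power2_eq_square power3_eq_cube algebra_simps)
  qed
  then show "a * t^2 + t^3 \<le> 6 * Psi a t" "Psi a t \<le> a * t^2 + t^3" by simp_all
qed

lemma Psi_lower_bound: "0 < a \<Longrightarrow> a * y^2 + \<bar>y\<bar>^3 \<le> 6 * Psi a y"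
  using Psi_bounds_nonneg(1)[of a "\<bar>y\<bar>"] by (simp add: Psi_abs)

lemma Psi_upper_bound: "0 < a \<Longrightarrow> Psi a y \<le> a * y^2 + \<bar>y\<bar>^3"
  using Psi_bounds_nonneg(2)[of a "\<bar>y\<bar>"] by (simp add: Psi_abs)

lemma Psi_deriv_elasticity:
  assumes a: "0 < a" and t: "0 \<le> t"
  shows "t * Psi_deriv a t \<le> 4 * Psi a t"
proof (cases "t < a")
  case True
  have "t^3 \<le> a * t^2"
    using True t mult_right_mono[of t a "t^2"] by (simp add: power2_eq_square power3_eq_cube)
  moreover have "0 \<le> a * t^2" using a by simp
  moreover have "t * Psi_deriv a t = 2 * a * t^2 - t^3" "Psi a t = a * t^2 - t^3 / 3"
    using True t a unfolding Psi_def
    by (simp_all add: Psi_deriv_nonneg_eq power2_eq_square power3_eq_cube algebra_simps)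
  ultimately show ?thesis by linarith
next
  case False
  define s where "s = t - a"
  have s: "0 \<le> s" using False s_def by simp
  have "t * Psi_deriv a t - 4 * Psi a t = - 5/3 * a^3 - 3 * a^2 * s + 3 * a * s^2 - s^3"
    using False t a unfolding Psi_def s_def
    by (simp add: Psi_deriv_nonneg_eq power2_eq_square power3_eq_cube algebra_simps)
  moreover have "s * (s - 3/2 * a)^2 = s^3 - 3 * a * s^2 + 9/4 * a^2 * s"
    by (simp add: power2_eq_square power3_eq_cube algebra_simps)
  moreover have "0 \<le> s * (s - 3/2 * a)^2" "0 \<le> a^2 * s" "0 \<le> a^3"
    using s a by simp_all
  ultimately show ?thesis by linarith
qed

lemma Psi_mult_le:
  assumes a: "0 < a" and m: "1 \<le> m"
  shows "Psi a (m * y) \<le> m^4 * Psi a y"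
proof (cases "y = 0")
  case True
  then show ?thesis using Psi_zero[OF a] by simp
next
  case False
  have "Psi a (m * \<bar>y\<bar>) \<le> m^4 * Psi a \<bar>y\<bar>"
    using mult_le_power_if_elasticity_le[OF DERIV_Psi[OF a], of 4] Psi_deriv_elasticity[OF a] False m
    by simp
  then show ?thesis
    using m by (metis Psi_abs abs_mult abs_of_nonneg dual_order.trans zero_le_one)
qed

lemma Psi_nonneg:
  assumes "0 < a"
  shows "0 \<le> Psi a y"
proof -
  have "0 \<le> a * y^2 + \<bar>y\<bar>^3" using assms by simp
  then show ?thesis using Psi_lower_bound[OF assms, of y] by linarith
qed

lemma Psi_pos:
  assumes "0 < a" "y \<noteq> 0"
  shows "0 < Psi a y"
proof -
  have "0 < a * y^2 + \<bar>y\<bar>^3" using assms by (simp add: add_pos_nonneg)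
  then show ?thesis using Psi_lower_bound[OF assms(1), of y] by linarith
qed

lemma abs_Psi_div_le: "0 < a \<Longrightarrow> \<bar>Psi a x / x\<bar> \<le> a * \<bar>x\<bar> + x^2"
proof (cases "x = 0")
  case False
  assume a: "0 < a"
  have "\<bar>Psi a x / x\<bar> = Psi a x / \<bar>x\<bar>"
    using Psi_nonneg[OF a] by simp
  also have "\<dots> \<le> (a * \<bar>x\<bar>^2 + \<bar>x\<bar>^3) / \<bar>x\<bar>"
    using Psi_upper_bound[OF a, of x] by (intro divide_right_mono) simp_all
  also have "\<dots> = a * \<bar>x\<bar> + x^2"
    using False by (simp add: field_simps power2_eq_square power3_eq_cube)
  finally show ?thesis .
qed simp

lemma convex_on_Psi: "0 < a \<Longrightarrow> convex_on UNIV (Psi a)"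
  by (rule convex_on_realI[where f' = "Psi_deriv a"])
     (auto simp: DERIV_Psi strict_mono_Psi_deriv strict_mono_less_eq)

lemma strictly_convex_on_Psi: "0 < a \<Longrightarrow> strictly_convex_on UNIV (Psi a)"
  by (rule strictly_convex_on_UNIV_if_deriv_strict_mono[OF DERIV_Psi strict_mono_Psi_deriv])

lemma strict_mono_on_Psi:
  assumes a: "0 < a"
  shows "strict_mono_on {0..} (Psi a)"
proof (rule strict_mono_onI)
  fix x y :: real assume x: "x \<in> {0..}" and xy: "x < y"
  from xy show "Psi a x < Psi a y"
  proof (rule DERIV_pos_imp_increasing_open)
    fix z assume "x < z"
    then have "Psi_deriv a 0 < Psi_deriv a z"
      using x by (intro Psi_deriv_less_nonneg[OF a]) auto
    then show "\<exists>d. (Psi a has_real_derivative d) (at z) \<and> 0 < d"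
      using DERIV_Psi[OF a] Psi_deriv_zero by auto
  next
    show "continuous_on {x..y} (Psi a)"
      using DERIV_Psi[OF a] by (meson DERIV_continuous continuous_at_imp_continuous_on)
  qed
qed

lemma C2_Psi: "0 < a \<Longrightarrow> C2 (Psi a)"
  unfolding C2_def using DERIV_Psi DERIV_Psi_deriv
  by (intro exI conjI allI) (auto intro!: continuous_intros)

lemma young_function_Psi:
  assumes a: "0 < a"
  shows "young_function (Psi a)"
  unfolding young_function_def
proof (intro conjI allI)
  show "Psi a (- x) = Psi a x" for x
    unfolding Psi_def by simp
  show "convex_on UNIV (Psi a)" "0 \<le> Psi a x" for x
    using a by (simp_all add: convex_on_Psi Psi_nonneg)
  show "Psi a x = 0 \<longleftrightarrow> x = 0" for x
    using Psi_pos[OF a, of x] Psi_zero[OF a] by (cases "x = 0") auto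
  show "((\<lambda>x. Psi a x / x) \<longlongrightarrow> 0) (at 0)"
  proof (rule Lim_null_comparison)
    show "\<forall>\<^sub>F x in at 0. norm (Psi a x / x) \<le> a * \<bar>x\<bar> + x^2"
      using abs_Psi_div_le[OF a] by simp
    show "((\<lambda>x. a * \<bar>x\<bar> + x^2) \<longlongrightarrow> 0) (at 0)"
      by (rule tendsto_eq_intros refl | simp)+
  qed
  show "filterlim (\<lambda>x. Psi a x / x) at_top at_top"
  proof (rule filterlim_at_top_mono)
    show "filterlim (\<lambda>x. a / 6 * x) at_top at_top"
      using a by (intro filterlim_tendsto_pos_mult_at_top[OF tendsto_const]) (auto simp: filterlim_ident)
    have "a / 6 * x \<le> Psi a x / x" if "0 < x" for x
    proof -
      have "a * x^2 \<le> 6 * Psi a x"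
        using Psi_lower_bound[OF a, of x] zero_le_power_abs[of x 3] by linarith
      then show ?thesis
        using that by (simp add: le_divide_eq power2_eq_square)
    qed
    then show "\<forall>\<^sub>F x in at_top. a / 6 * x \<le> Psi a x / x"
      by (intro eventually_at_top_linorderI[of 1]) simp
  qed
qed

section \<open>The Orlicz space of Psi\<close>

lemma young_Psi: "0 < a \<Longrightarrow> young (Psi a)"
  by (simp add: young_def young_function_Psi)

lemma young_delta2_Psi:
  assumes "0 < a"
  shows "young_delta2 (Psi a) 4"
  using young_function_Psi[OF assms] Psi_mult_le[OF assms]
  by unfold_locales simp_all

lemma Psi_ge_powr:
  assumes "0 < a"
  shows "a / 6 * \<bar>y\<bar> powr 2 \<le> Psi a y" "1 / 6 * \<bar>y\<bar> powr 3 \<le> Psi a y"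
proof -
  have "a * y^2 + \<bar>y\<bar>^3 \<le> 6 * Psi a y" "0 \<le> a * y^2" "0 \<le> \<bar>y\<bar>^3"
    using Psi_lower_bound[OF assms] assms by simp_all
  moreover have "a / 6 * \<bar>y\<bar> powr 2 = (a * y^2) / 6" "1 / 6 * \<bar>y\<bar> powr 3 = \<bar>y\<bar>^3 / 6"
    by simp_all
  ultimately show "a / 6 * \<bar>y\<bar> powr 2 \<le> Psi a y" "1 / 6 * \<bar>y\<bar> powr 3 \<le> Psi a y"
    by linarith+
qed

lemma Psi_le_powr: "0 < a \<Longrightarrow> Psi a y \<le> a * \<bar>y\<bar> powr 2 + 1 * \<bar>y\<bar> powr 3"
  using Psi_upper_bound[of a y] by simp

lemma orlicz_Psi:
  assumes a: "0 < a"
  shows "orlicz (Psi a) = Lp_space 2 \<inter> Lp_space 3"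
proof -
  interpret young_delta2 "Psi a" 4
    using young_delta2_Psi[OF a] .
  show ?thesis
    using orlicz_subset_Lp_space[OF Psi_ge_powr(1)[OF a]] orlicz_subset_Lp_space[OF Psi_ge_powr(2)[OF a]]
      Lp_space_inter_subset_orlicz[OF Psi_le_powr[OF a]] a
    by auto
qed

lemma Lp_norm_2_le_gauge_norm_Psi:
  assumes a: "0 < a" and f: "f \<in> orlicz (Psi a)"
  shows "Lp_norm 2 f \<le> 3 * a powr (- 1 / 2) * gauge_norm (Psi a) f"
proof -
  interpret young_delta2 "Psi a" 4
    using young_delta2_Psi[OF a] .
  have "Lp_norm 2 f \<le> (a / 6) powr (- 1 / 2) * gauge_norm (Psi a) f"
    using Lp_norm_le_gauge_norm[OF Psi_ge_powr(1)[OF a] _ _ f] a by simp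
  also have "(a / 6) powr (- 1 / 2) = sqrt 6 * a powr (- 1 / 2)"
    using a by (simp add: powr_divide powr_minus_divide powr_half_sqrt)
  also have "sqrt 6 \<le> 3"
    by (rule real_le_lsqrt) simp_all
  finally show ?thesis
    using gauge_norm_nonneg[OF f] by (simp add: mult_right_mono)
qed

lemma Lp_norm_3_le_gauge_norm_Psi:
  assumes a: "0 < a" and f: "f \<in> orlicz (Psi a)"
  shows "Lp_norm 3 f \<le> 3 * gauge_norm (Psi a) f"
proof -
  interpret young_delta2 "Psi a" 4
    using young_delta2_Psi[OF a] .
  have "Lp_norm 3 f \<le> (1 / 6) powr (- 1 / 3) * gauge_norm (Psi a) f"
    using Lp_norm_le_gauge_norm[OF Psi_ge_powr(2)[OF a] _ _ f] by simp
  also have "(1 / 6 :: real) powr (- 1 / 3) = 6 powr (1 / 3)"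
    by (simp add: powr_divide powr_minus_divide)
  also have "\<dots> \<le> 6 powr (1 / 2)"
    by (intro powr_mono) simp_all
  also have "\<dots> \<le> 3"
    by (simp add: powr_half_sqrt real_le_lsqrt)
  finally show ?thesis
    using gauge_norm_nonneg[OF f] by (simp add: mult_right_mono)
qed

lemma gauge_norm_Psi_le_max_Lp_norm:
  assumes a: "0 < a" and f: "f \<in> orlicz (Psi a)"
  shows "gauge_norm (Psi a) f \<le> 2 * (sqrt a + 1) * max (Lp_norm 2 f) (Lp_norm 3 f)"
proof (rule dense_ge)
  interpret young_delta2 "Psi a" 4
    using young_delta2_Psi[OF a] .
  define K where "K = 2 * (sqrt a + 1)"
  have "a \<le> (sqrt a + 1)^2"
    using a power_mono[of "sqrt a" "sqrt a + 1" 2] by simp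
  moreover have "K^2 = 4 * (sqrt a + 1)^2"
    unfolding K_def power_mult_distrib by simp
  ultimately have "2 \<le> K" "4 * a \<le> K^2"
    using a by (simp_all add: K_def)
  then have K: "2 \<le> K" "a * (1 / K)^2 \<le> 1 / 4" "(1 / K)^3 \<le> (1 / 2)^3"
    by (simp_all add: power_divide divide_le_eq power_mono[of 2 K 3, simplified])
  fix l assume "2 * (sqrt a + 1) * max (Lp_norm 2 f) (Lp_norm 3 f) < l"
  then have less: "K * max (Lp_norm 2 f) (Lp_norm 3 f) < l"
    by (simp add: K_def)
  have l: "0 < l" "0 \<le> Lp_norm p f / l" "Lp_norm p f / l \<le> 1 / K" if "p \<in> {2, 3}" for p
  proof -
    have "0 \<le> K * Lp_norm p f" "K * Lp_norm p f \<le> K * max (Lp_norm 2 f) (Lp_norm 3 f)"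
      using that K(1) Lp_norm_nonneg[of p f] by (auto intro: mult_left_mono)
    then have "0 < l" "K * Lp_norm p f \<le> l"
      using less by linarith+
    then show "0 < l" "0 \<le> Lp_norm p f / l" "Lp_norm p f / l \<le> 1 / K"
      using K(1) Lp_norm_nonneg[of p f] by (simp_all add: field_simps)
  qed
  have "a * (Lp_norm 2 f / l) powr 2 + 1 * (Lp_norm 3 f / l) powr 3 \<le> a * (1 / K)^2 + (1 / K)^3"
    using l[of 2] l[of 3] a by (auto intro!: add_mono mult_left_mono power_mono)
  also have "\<dots> \<le> 1"
    using K(2,3) by (simp add: power_divide)
  finally have "ennreal (a * (Lp_norm 2 f / l) powr 2 + 1 * (Lp_norm 3 f / l) powr 3) \<le> 1"
    by simp
  moreover have "modular (Psi a) f l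
      \<le> ennreal (a * (Lp_norm 2 f / l) powr 2 + 1 * (Lp_norm 3 f / l) powr 3)"
    using f orlicz_Psi[OF a] a l[of 2] by (intro modular_le_Lp_norm Psi_le_powr) auto
  ultimately show "gauge_norm (Psi a) f \<le> l"
    using l[of 2] by (intro gauge_norm_le) (auto intro: order.trans)
qed

lemma gauge_norm_Psi_equivalent_max_Lp_norm:
  assumes a: "0 < a"
  shows "\<exists>c C. 0 < c \<and> 0 < C \<and> (\<forall>f\<in>orlicz (Psi a).
           c * max (Lp_norm 2 f) (Lp_norm 3 f) \<le> gauge_norm (Psi a) f \<and>
           gauge_norm (Psi a) f \<le> C * max (Lp_norm 2 f) (Lp_norm 3 f))"
proof (intro exI conjI ballI)
  interpret young_delta2 "Psi a" 4
    using young_delta2_Psi[OF a] .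
  define K where "K = 3 * a powr (- 1 / 2) + 3"
  have K: "3 * a powr (- 1 / 2) \<le> K" "3 \<le> K"
    by (simp_all add: K_def)
  show "0 < 1 / K"
    using K by simp
  show "0 < 2 * (sqrt a + 1)"
    using a by (simp add: add_nonneg_pos)
  fix f assume f: "f \<in> orlicz (Psi a)"
  show "gauge_norm (Psi a) f \<le> 2 * (sqrt a + 1) * max (Lp_norm 2 f) (Lp_norm 3 f)"
    by (rule gauge_norm_Psi_le_max_Lp_norm[OF a f])
  have "Lp_norm 2 f \<le> K * gauge_norm (Psi a) f" "Lp_norm 3 f \<le> K * gauge_norm (Psi a) f"
    using Lp_norm_2_le_gauge_norm_Psi[OF a f] Lp_norm_3_le_gauge_norm_Psi[OF a f]
      mult_right_mono[OF K(1) gauge_norm_nonneg[OF f]] mult_right_mono[OF K(2) gauge_norm_nonneg[OF f]]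
    by linarith+
  then show "1 / K * max (Lp_norm 2 f) (Lp_norm 3 f) \<le> gauge_norm (Psi a) f"
    using K by (simp add: field_simps)
qed

theorem lemma3p1:
  shows
   "(\<forall>\<alpha>>0.
      young_function (Psi \<alpha>) \<and>
      strictly_convex_on UNIV (Psi \<alpha>) \<and>
      strict_mono_on {0..} (Psi \<alpha>) \<and>
      C2 (Psi \<alpha>) \<and>
      (\<forall>f\<in>orlicz (Psi \<alpha>). \<not> (AE x in lebesgue. f x = 0) \<longrightarrow>
         gauge_norm (Psi \<alpha>) f > 0 \<and>
         (\<integral>\<^sup>+ x. ennreal (Psi \<alpha> (f x / gauge_norm (Psi \<alpha>) f)) \<partial>lebesgue) = 1 \<and>
         (\<forall>l>0. (\<integral>\<^sup>+ x. ennreal (Psi \<alpha> (f x / l)) \<partial>lebesgue) = 1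
                  \<longrightarrow> l = gauge_norm (Psi \<alpha>) f)) \<and>
      (\<forall>f\<in>orlicz (Psi \<alpha>).
         0 \<le> gauge_norm (Psi \<alpha>) f \<and>
         (gauge_norm (Psi \<alpha>) f = 0 \<longleftrightarrow> (AE x in lebesgue. f x = 0)) \<and>
         (\<forall>c. (\<lambda>x. c * f x) \<in> orlicz (Psi \<alpha>) \<and>
              gauge_norm (Psi \<alpha>) (\<lambda>x. c * f x) = \<bar>c\<bar> * gauge_norm (Psi \<alpha>) f) \<and>
         (\<forall>g\<in>orlicz (Psi \<alpha>). (\<lambda>x. f x + g x) \<in> orlicz (Psi \<alpha>) \<and>
              gauge_norm (Psi \<alpha>) (\<lambda>x. f x + g x)
                \<le> gauge_norm (Psi \<alpha>) f + gauge_norm (Psi \<alpha>) g)) \<and>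
      orlicz (Psi \<alpha>) = Lp_space 2 \<inter> Lp_space 3 \<and>
      (\<exists>c C. 0 < c \<and> 0 < C \<and>
         (\<forall>f\<in>orlicz (Psi \<alpha>).
            c * max (Lp_norm 2 f) (Lp_norm 3 f) \<le> gauge_norm (Psi \<alpha>) f \<and>
            gauge_norm (Psi \<alpha>) f \<le> C * max (Lp_norm 2 f) (Lp_norm 3 f))))
    \<and>
    (\<exists>C>0. \<forall>\<alpha>>0. \<forall>f\<in>orlicz (Psi \<alpha>).
        Lp_norm 2 f \<le> C * \<alpha> powr (-1/2) * gauge_norm (Psi \<alpha>) f \<and>
        Lp_norm 3 f \<le> C * gauge_norm (Psi \<alpha>) f)"
  apply (intro conjI allI impI ballI)
  subgoal by (rule young_function_Psi)
  subgoal by (rule strictly_convex_on_Psi)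
  subgoal by (rule strict_mono_on_Psi)
  subgoal by (rule C2_Psi)
  subgoal for \<alpha> f
    by (simp add: young.gauge_norm_pos_iff[OF young_Psi])
  subgoal for \<alpha> f
    using young_delta2.modular_gauge_norm[OF young_delta2_Psi, of \<alpha> f]
      young.gauge_norm_pos_iff[OF young_Psi, of \<alpha> f]
    by (simp add: modular_def)
  subgoal for \<alpha> f l
    using young_delta2.gauge_norm_unique[OF young_delta2_Psi, of \<alpha> f l]
      young.gauge_norm_pos_iff[OF young_Psi, of \<alpha> f]
    by (simp add: modular_def)
  subgoal by (rule young.gauge_norm_nonneg[OF young_Psi])
  subgoal by (rule young.gauge_norm_eq_0_iff[OF young_Psi])
  subgoal by (rule young.orlicz_cmult[OF young_Psi])
  subgoal by (rule young.gauge_norm_cmult[OF young_Psi])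
  subgoal by (rule young.orlicz_add[OF young_Psi])
  subgoal by (rule young.gauge_norm_triangle[OF young_Psi])
  subgoal by (rule orlicz_Psi)
  subgoal by (rule gauge_norm_Psi_equivalent_max_Lp_norm)
  subgoal
    using Lp_norm_2_le_gauge_norm_Psi Lp_norm_3_le_gauge_norm_Psi by (intro exI[of _ 3]) auto
  done

end
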